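(* In the Nakagami model with parameters $L_c>0$, $L_s>0$, the distortion exponent achievable by the joint decoding scheme with rate $R_j=\frac{r_j}{2}\log_2\rho$, $$\Delta_j(L_s,L_c):=\sup_{r_j>0}\ \lim_{\rho\to\infty}-\frac{\log ED_j\big(\tfrac{r_j}{2}\log_2\rho\big)}{\log\rho},$$ equals $$\Delta_j(L_s,L_c)=\begin{cases}1-\dfrac{(1-L_s)^2}{L_c+1-L_s}&\text{if }L_s\le1,\\[2mm] 2-\dfrac1{L_s}&\text{if }1<L_s\le1+L_c,\\[2mm] 1+\dfrac{L_c}{L_c+1}&\text{if }L_s>1+L_c.\end{cases}$$
   Context: Nakagami model: for SNR $\rho>0$, the channel gain is $H=\rho H_0$ and the side-information gain is $\Gamma=\rho\Gamma_0$, where $H_0,\Gamma_0$ are independent, $H_0$ is Gamma distributed with shape $L_c$ and scale $1/L_c$, and $\Gamma_0$ is Gamma distributed with shape $L_s$ and scale $1/L_s$ (Gamma$(L,\theta)$ density $\frac{1}{\theta^L\Gamma(L)}x^{L-1}e^{-x/\theta}$, $x\ge0$). Define $D_d(R,\gamma)=(\gamma+2^{2R})^{-1}$. For $R_j>0$, the JDS outage set is $\mathcal O_j=\{(h,\gamma):\tfrac12\log_2(1+\tfrac{2^{2R_j}-1}{\gamma+1})\ge\tfrac12\log_2(1+h)\}$ and $ED_j(R_j)=\mathrm E[D_d(R_j,\Gamma)\mathbf 1\{(H,\Gamma)\notin\mathcal O_j\}]+\mathrm E[D_d(0,\Gamma)\mathbf 1\{(H,\Gamma)\in\mathcal O_j\}]$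 (a function of $\rho$ through $H,\Gamma$). *)

theory Defs
  imports "HOL-Analysis.Analysis"
begin

definition gamma_density :: "real \<Rightarrow> real \<Rightarrow> real \<Rightarrow> real" where
  "gamma_density L \<theta> x =
     (if 0 \<le> x then x powr (L - 1) * exp (- x / \<theta>) / (\<theta> powr L * Gamma L) else 0)"

definition D_d :: "real \<Rightarrow> real \<Rightarrow> real" where
  "D_d R \<gamma> = 1 / (\<gamma> + 2 powr (2 * R))"

definition outage_j :: "real \<Rightarrow> (real \<times> real) set" where
  "outage_j Rj = {(h, \<gamma>). 1/2 * log 2 (1 + (2 powr (2 * Rj) - 1) / (\<gamma> + 1)) \<ge> 1/2 * log 2 (1 + h)}"

text \<open>Expected distortion ED_j(R_j) at SNR rho in the Nakagami model:
  H = rho * H0, Gamma = rho * Gamma0 with H0 ~ Gamma(Lc, 1/Lc), Gamma0 ~ Gamma(Ls, 1/Ls)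
  independent; the expectation is the integral against the product density.\<close>
definition ED_j :: "real \<Rightarrow> real \<Rightarrow> real \<Rightarrow> real \<Rightarrow> real" where
  "ED_j Ls Lc Rj \<rho> =
     (\<integral>z. (case z of (h0, g0) \<Rightarrow>
         gamma_density Lc (1 / Lc) h0 * gamma_density Ls (1 / Ls) g0 *
         (D_d Rj (\<rho> * g0) * indicator (- outage_j Rj) (\<rho> * h0, \<rho> * g0)
          + D_d 0 (\<rho> * g0) * indicator (outage_j Rj) (\<rho> * h0, \<rho> * g0)))
      \<partial>(lborel \<Otimes>\<^sub>M lborel))"

definition Delta_formula :: "real \<Rightarrow> real \<Rightarrow> real" where
  "Delta_formula Ls Lc =
     (if Ls \<le> 1 then 1 - (1 - Ls)\<^sup>2 / (Lc + 1 - Ls)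
      else if Ls \<le> 1 + Lc then 2 - 1 / Ls
      else 1 + Lc / (Lc + 1))"

end

theory Submission
  imports Defs "HOL-Real_Asymp.Real_Asymp"
begin

text \<open>
  Put \<open>s = \<rho>^r = 2^(2R)\<close>. Given the fading gains \<open>h, g\<close>, the distortion is \<open>1/(\<rho>g + 1)\<close> on the
  outage event \<open>\<rho>h(\<rho>g + 1) \<le> s - 1\<close> and \<open>1/(\<rho>g + s)\<close> off it. Weighted AM-GM off the outage
  event and the outage condition on it bound the distortion by
  \<open>\<rho>^-(\<theta> + r(1 - \<theta>)) g^-\<theta> + \<rho>^-(\<theta>' + (1 - r)\<kappa>) h^-\<kappa> g^-\<theta>'\<close>, and the negative moments of the
  Gamma densities are finite for \<open>\<theta>, \<theta>' < Ls\<close> and \<open>\<kappa> < Lc\<close>. Conversely, a Gamma density of shape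
  \<open>L\<close> puts mass of order \<open>x^L\<close> on \<open>[x/2, x]\<close>, so restricting the expectation to boxes
  \<open>g \<approx> \<rho>^-\<beta>\<close>, \<open>h \<approx> \<rho>^-\<gamma>\<close> inside or outside the outage event gives matching lower bounds. For every
  \<open>r\<close> the parameters can be chosen so that both kinds of bound have the same exponent, a piecewise
  linear function of \<open>r\<close> whose supremum over \<open>r > 0\<close> is the claimed formula.
\<close>

lemma powr_mult_powr_le_add:
  fixes a b t :: real
  assumes "0 < a" "0 < b" "0 \<le> t" "t \<le> 1"
  shows "a powr t * b powr (1 - t) \<le> a + b"
proof -
  define m where "m = max a b"
  have "a powr t * b powr (1 - t) \<le> m powr t * m powr (1 - t)"
    using assms by (intro mult_mono powr_mono2) (auto simp: m_def)
  also have "\<dots> = m" using assms by (simp add: m_def powr_add[symmetric])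
  also have "\<dots> \<le> a + b" using assms by (simp add: m_def)
  finally show ?thesis .
qed

lemma add_one_powr_neg_le:
  fixes x t a :: real
  assumes "0 < x" "0 \<le> t" "t \<le> a"
  shows "(x + 1) powr (- a) \<le> x powr (- t)"
proof (cases "1 \<le> x")
  case True
  have "(x + 1) powr (- a) \<le> x powr (- a)" using assms by (intro powr_mono2') auto
  also have "\<dots> \<le> x powr (- t)" using assms True by (intro powr_mono) auto
  finally show ?thesis .
next
  case False
  have "(x + 1) powr (- a) \<le> (x + 1) powr 0" using assms by (intro powr_mono) auto
  also have "\<dots> \<le> x powr (- t)" using assms False powr_mono'[of "- t" 0 x] by simp
  finally show ?thesis .
qed

lemma neg_ln_div_ln_le:
  fixes \<rho> K E F :: real
  assumes "1 < \<rho>" "0 < K" "K * \<rho> powr (- E) \<le> F"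
  shows "- ln F / ln \<rho> \<le> E - ln K / ln \<rho>"
proof -
  have "ln K - E * ln \<rho> = ln (K * \<rho> powr (- E))" using assms by (simp add: ln_mult)
  also have "\<dots> \<le> ln F"
    using assms by (subst ln_le_cancel_iff) (auto intro: less_le_trans[of 0 "K * \<rho> powr (- E)"])
  finally have "- ln F / ln \<rho> \<le> (E * ln \<rho> - ln K) / ln \<rho>"
    using assms by (intro divide_right_mono) auto
  also have "\<dots> = E - ln K / ln \<rho>" using assms by (simp add: field_simps)
  finally show ?thesis .
qed

lemma neg_ln_div_ln_ge:
  fixes \<rho> C E F :: real
  assumes "1 < \<rho>" "0 < F" "F \<le> C * \<rho> powr (- E)"
  shows "E - ln C / ln \<rho> \<le> - ln F / ln \<rho>"
proof -
  have C: "0 < C" using assms by (smt (verit) powr_gt_zero zero_less_mult_pos2)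
  have "ln F \<le> ln (C * \<rho> powr (- E))" using assms C by (subst ln_le_cancel_iff) auto
  also have "\<dots> = ln C - E * ln \<rho>" using assms C by (simp add: ln_mult)
  finally have "(E * ln \<rho> - ln C) / ln \<rho> \<le> - ln F / ln \<rho>"
    using assms by (intro divide_right_mono) auto
  moreover have "(E * ln \<rho> - ln C) / ln \<rho> = E - ln C / ln \<rho>" using assms by (simp add: field_simps)
  ultimately show ?thesis by simp
qed

lemma tendsto_neg_ln_div_ln:
  fixes F :: "real \<Rightarrow> real" and e :: real
  assumes lower: "\<And>y. e < y \<Longrightarrow> \<exists>K>0. \<exists>E<y. \<forall>\<^sub>F \<rho> in at_top. K * \<rho> powr (- E) \<le> F \<rho>"
    and upper: "\<And>y. y < e \<Longrightarrow> \<exists>C. \<exists>E>y. \<forall>\<^sub>F \<rho> in at_top. 0 < F \<rho> \<and> F \<rho> \<le> C * \<rho> powr (- E)"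
  shows "((\<lambda>\<rho>. - ln (F \<rho>) / ln \<rho>) \<longlongrightarrow> e) at_top"
proof (rule order_tendstoI)
  fix y assume "e < y"
  then obtain K E where K: "0 < K" and "E < y" and bound: "\<forall>\<^sub>F \<rho> in at_top. K * \<rho> powr (- E) \<le> F \<rho>"
    using lower by blast
  have "((\<lambda>\<rho>. E - ln K / ln \<rho>) \<longlongrightarrow> E) at_top" by real_asymp
  then have "\<forall>\<^sub>F \<rho> in at_top. E - ln K / ln \<rho> < y" using \<open>E < y\<close> by (rule order_tendstoD)
  with bound eventually_gt_at_top[of 1] show "\<forall>\<^sub>F \<rho> in at_top. - ln (F \<rho>) / ln \<rho> < y"
    by eventually_elim (use K neg_ln_div_ln_le in fastforce)
next
  fix y assume "y < e"
  then obtain C E where "y < E" and bound: "\<forall>\<^sub>F \<rho> in at_top. 0 < F \<rho> \<and> F \<rho> \<le> C * \<rho> powr (- E)"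
    using upper by blast
  have "((\<lambda>\<rho>. E - ln C / ln \<rho>) \<longlongrightarrow> E) at_top" by real_asymp
  then have "\<forall>\<^sub>F \<rho> in at_top. y < E - ln C / ln \<rho>" using \<open>y < E\<close> by (rule order_tendstoD)
  with bound eventually_gt_at_top[of 1] show "\<forall>\<^sub>F \<rho> in at_top. y < - ln (F \<rho>) / ln \<rho>"
    by eventually_elim (use neg_ln_div_ln_ge in fastforce)
qed

lemma nn_integral_pair_measure_times:
  fixes f :: "'a \<Rightarrow> ennreal" and g :: "'b \<Rightarrow> ennreal"
  assumes "sigma_finite_measure M" "sigma_finite_measure N"
    and [measurable]: "f \<in> borel_measurable M" "g \<in> borel_measurable N"
  shows "(\<integral>\<^sup>+z. f (fst z) * g (snd z) \<partial>(M \<Otimes>\<^sub>M N)) = (\<integral>\<^sup>+x. f x \<partial>M) * (\<integral>\<^sup>+y. g y \<partial>N)"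
proof -
  interpret N: sigma_finite_measure N by fact
  have "(\<integral>\<^sup>+z. f (fst z) * g (snd z) \<partial>(M \<Otimes>\<^sub>M N)) = (\<integral>\<^sup>+x. \<integral>\<^sup>+y. f x * g y \<partial>N \<partial>M)"
    by (subst N.nn_integral_fst[symmetric]) auto
  also have "\<dots> = (\<integral>\<^sup>+x. f x * (\<integral>\<^sup>+y. g y \<partial>N) \<partial>M)"
    by (simp add: nn_integral_cmult)
  also have "\<dots> = (\<integral>\<^sup>+x. f x \<partial>M) * (\<integral>\<^sup>+y. g y \<partial>N)"
    by (simp add: nn_integral_multc)
  finally show ?thesis .
qed

section \<open>Gamma densities\<close>

definition gamma_moment :: "real \<Rightarrow> real \<Rightarrow> real \<Rightarrow> real" where
  "gamma_moment L \<theta> \<tau> = \<theta> powr \<tau> * Gamma (L + \<tau>) / Gamma L"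

lemma gamma_moment_pos: "0 < L \<Longrightarrow> 0 < \<theta> \<Longrightarrow> - L < \<tau> \<Longrightarrow> 0 < gamma_moment L \<theta> \<tau>"
  unfolding gamma_moment_def by simp

lemma gamma_moment_0: "0 < L \<Longrightarrow> 0 < \<theta> \<Longrightarrow> gamma_moment L \<theta> 0 = 1"
  unfolding gamma_moment_def using Gamma_real_pos[of L] by (simp add: less_imp_neq[symmetric])

lemma gamma_density_pos_eq:
  "0 < x \<Longrightarrow> gamma_density L \<theta> x = x powr (L - 1) * exp (- x / \<theta>) / (\<theta> powr L * Gamma L)"
  unfolding gamma_density_def by simp

lemma gamma_density_nonpos: "x \<le> 0 \<Longrightarrow> gamma_density L \<theta> x = 0"
  unfolding gamma_density_def by auto

lemma gamma_density_nonneg: "0 < L \<Longrightarrow> 0 < \<theta> \<Longrightarrow> 0 \<le> gamma_density L \<theta> x"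
  unfolding gamma_density_def using Gamma_real_pos[of L] by auto

lemma borel_measurable_gamma_density [measurable]: "gamma_density L \<theta> \<in> borel_measurable borel"
  unfolding gamma_density_def by measurable

lemma nn_integral_gamma_density_powr:
  assumes L: "0 < L" and \<theta>: "0 < \<theta>" and \<tau>: "- L < \<tau>"
  shows "(\<integral>\<^sup>+x. ennreal (gamma_density L \<theta> x * x powr \<tau>) \<partial>lborel) = ennreal (gamma_moment L \<theta> \<tau>)"
proof -
  define c where "c = \<theta> powr \<tau> / Gamma L"
  have c: "0 \<le> c" using Gamma_real_pos[OF L] \<theta> by (simp add: c_def)
  define f where "f x = ennreal (gamma_density L \<theta> x * x powr \<tau>)" for x
  have [measurable]: "f \<in> borel_measurable borel" unfolding f_def by measurable
  have scaled: "ennreal \<theta> * f (\<theta> * y) = ennreal c * ennreal (indicator {0..} y * y powr (L + \<tau> - 1) / exp y)"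
    for y
  proof (cases "0 < y")
    case True
    have "\<theta> * gamma_density L \<theta> (\<theta> * y) * (\<theta> * y) powr \<tau>
        = \<theta> * ((\<theta> * y) powr (L - 1) * (\<theta> * y) powr \<tau>) * exp (- y) / (\<theta> powr L * Gamma L)"
      using True \<theta> by (simp add: gamma_density_pos_eq)
    also have "(\<theta> * y) powr (L - 1) * (\<theta> * y) powr \<tau> = \<theta> powr (L + \<tau> - 1) * y powr (L + \<tau> - 1)"
      using True \<theta> by (simp add: powr_add[symmetric] powr_mult algebra_simps)
    also have "\<theta> * (\<theta> powr (L + \<tau> - 1) * y powr (L + \<tau> - 1)) * exp (- y) / (\<theta> powr L * Gamma L)
        = c * (y powr (L + \<tau> - 1) / exp y)"
      using \<theta> Gamma_real_pos[OF L]
      by (simp add: c_def powr_diff powr_add exp_minus field_simps)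
    finally have "\<theta> * (gamma_density L \<theta> (\<theta> * y) * (\<theta> * y) powr \<tau>) = c * (y powr (L + \<tau> - 1) / exp y)"
      by (simp only: mult.assoc)
    then show ?thesis
      using True \<theta> c by (simp add: f_def ennreal_mult'[symmetric])
  next
    case False
    then show ?thesis using \<theta> by (cases "y = 0") (auto simp: f_def gamma_density_nonpos mult_nonneg_nonpos)
  qed
  have "(\<integral>\<^sup>+x. f x \<partial>lborel) = ennreal \<theta> * (\<integral>\<^sup>+y. f (\<theta> * y) \<partial>lborel)"
    using nn_integral_real_affine[of f \<theta> 0] \<theta> by simp
  also have "\<dots> = (\<integral>\<^sup>+y. ennreal \<theta> * f (\<theta> * y) \<partial>lborel)"
    by (rule nn_integral_cmult[symmetric]) measurable
  also have "\<dots> = ennreal c * ennreal (Gamma (L + \<tau>))"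
    unfolding scaled using \<tau> by (subst nn_integral_cmult) (auto simp: Gamma_conv_nn_integral_real)
  also have "\<dots> = ennreal (gamma_moment L \<theta> \<tau>)"
    using c Gamma_real_pos[of "L + \<tau>"] \<tau> by (simp add: ennreal_mult[symmetric] gamma_moment_def c_def)
  finally show ?thesis unfolding f_def .
qed

lemma nn_integral_gamma_density:
  assumes "0 < L" "0 < \<theta>"
  shows "(\<integral>\<^sup>+x. ennreal (gamma_density L \<theta> x) \<partial>lborel) = 1"
proof -
  have "(\<integral>\<^sup>+x. ennreal (gamma_density L \<theta> x) \<partial>lborel) = (\<integral>\<^sup>+x. ennreal (gamma_density L \<theta> x * x powr 0) \<partial>lborel)"
    by (rule nn_integral_cong) (auto simp: gamma_density_nonpos)
  also have "\<dots> = 1"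
    using nn_integral_gamma_density_powr[of L \<theta> 0] assms by (simp add: gamma_moment_0)
  finally show ?thesis .
qed

lemma gamma_density_ge_on_interval:
  assumes L: "0 < L" and \<theta>: "0 < \<theta>" and x: "x \<le> 1" and t: "x / 2 \<le> t" "t \<le> x" "0 < t"
  shows "min 1 (2 powr (1 - L)) * exp (- 1 / \<theta>) / (\<theta> powr L * Gamma L) * x powr (L - 1) \<le> gamma_density L \<theta> t"
proof -
  have "x powr (L - 1) * min 1 (2 powr (1 - L)) \<le> t powr (L - 1)"
  proof (cases "1 \<le> L")
    case True
    have "x powr (L - 1) * min 1 (2 powr (1 - L)) \<le> x powr (L - 1) * 2 powr (1 - L)"
      by (intro mult_left_mono) auto
    also have "\<dots> = (x / 2) powr (L - 1)"
      using t powr_minus_divide[of 2 "L - 1"] by (simp add: powr_divide)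
    also have "\<dots> \<le> t powr (L - 1)" using True t by (intro powr_mono2) auto
    finally show ?thesis .
  next
    case False
    have "x powr (L - 1) * min 1 (2 powr (1 - L)) \<le> x powr (L - 1)"
      by (intro mult_left_le) auto
    also have "x powr (L - 1) \<le> t powr (L - 1)" using False t by (intro powr_mono2') auto
    finally show ?thesis .
  qed
  moreover have "- 1 / \<theta> \<le> - t / \<theta>" using t x \<theta> by (intro divide_right_mono) auto
  then have "exp (- 1 / \<theta>) \<le> exp (- t / \<theta>)" by simp
  ultimately have "x powr (L - 1) * min 1 (2 powr (1 - L)) * exp (- 1 / \<theta>) \<le> t powr (L - 1) * exp (- t / \<theta>)"
    by (intro mult_mono) auto
  then have "x powr (L - 1) * min 1 (2 powr (1 - L)) * exp (- 1 / \<theta>) / (\<theta> powr L * Gamma L)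
      \<le> t powr (L - 1) * exp (- t / \<theta>) / (\<theta> powr L * Gamma L)"
    using \<theta> Gamma_real_pos[OF L] by (intro divide_right_mono) auto
  then show ?thesis using t by (simp add: gamma_density_pos_eq mult_ac)
qed

lemma gamma_density_interval_mass_ge:
  assumes L: "0 < L" and \<theta>: "0 < \<theta>"
  obtains c where "0 < c"
    "\<And>x. 0 < x \<Longrightarrow> x \<le> 1 \<Longrightarrow> ennreal (c * x powr L) \<le> (\<integral>\<^sup>+t\<in>{x/2..x}. ennreal (gamma_density L \<theta> t) \<partial>lborel)"
proof
  define k where "k = min 1 (2 powr (1 - L)) * exp (- 1 / \<theta>) / (\<theta> powr L * Gamma L)"
  have k: "0 < k" using Gamma_real_pos[OF L] \<theta> by (simp add: k_def)
  show "0 < k / 2" using k by simp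
  fix x :: real assume x: "0 < x" "x \<le> 1"
  have "(\<integral>\<^sup>+t\<in>{x/2..x}. ennreal (k * x powr (L - 1)) \<partial>lborel) \<le> (\<integral>\<^sup>+t\<in>{x/2..x}. ennreal (gamma_density L \<theta> t) \<partial>lborel)"
    using gamma_density_ge_on_interval[OF L \<theta> x(2)] x unfolding k_def
    by (intro nn_integral_mono) (auto split: split_indicator intro!: ennreal_leI)
  moreover have "k * x powr (L - 1) * (x / 2) = k / 2 * x powr L" using x by (simp add: powr_diff)
  then have "(\<integral>\<^sup>+t\<in>{x/2..x}. ennreal (k * x powr (L - 1)) \<partial>lborel) = ennreal (k / 2 * x powr L)"
    using x k by (simp add: nn_integral_cmult_indicator ennreal_mult'[symmetric])
  ultimately show "ennreal (k / 2 * x powr L) \<le> (\<integral>\<^sup>+t\<in>{x/2..x}. ennreal (gamma_density L \<theta> t) \<partial>lborel)"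
    by simp
qed

section \<open>Bounds on the expected distortion\<close>

definition conditional_distortion :: "real \<Rightarrow> real \<Rightarrow> real \<Rightarrow> real \<Rightarrow> real" where
  "conditional_distortion R \<rho> h g =
     D_d R (\<rho> * g) * indicator (- outage_j R) (\<rho> * h, \<rho> * g)
     + D_d 0 (\<rho> * g) * indicator (outage_j R) (\<rho> * h, \<rho> * g)"

lemma outage_j_iff:
  assumes "0 \<le> h" "0 \<le> \<gamma>" "1 \<le> 2 powr (2 * R)"
  shows "(h, \<gamma>) \<in> outage_j R \<longleftrightarrow> h * (\<gamma> + 1) \<le> 2 powr (2 * R) - 1"
proof -
  let ?s = "2 powr (2 * R)"
  have pos: "0 < 1 + (?s - 1) / (\<gamma> + 1)" using assms by (smt (verit) divide_nonneg_pos)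
  have "(h, \<gamma>) \<in> outage_j R \<longleftrightarrow> log 2 (1 + h) \<le> log 2 (1 + (?s - 1) / (\<gamma> + 1))"
    unfolding outage_j_def by auto
  also have "\<dots> \<longleftrightarrow> 1 + h \<le> 1 + (?s - 1) / (\<gamma> + 1)"
    using pos assms by (intro log_le_cancel_iff) auto
  also have "\<dots> \<longleftrightarrow> h * (\<gamma> + 1) \<le> ?s - 1"
    using assms by (simp add: pos_le_divide_eq)
  finally show ?thesis .
qed

lemma conditional_distortion_eq:
  assumes "0 < \<rho>" "0 \<le> h" "0 \<le> g" "1 \<le> 2 powr (2 * R)"
  shows "conditional_distortion R \<rho> h g =
    (if \<rho> * h * (\<rho> * g + 1) \<le> 2 powr (2 * R) - 1 then 1 / (\<rho> * g + 1) else 1 / (\<rho> * g + 2 powr (2 * R)))"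
proof -
  have "(\<rho> * h, \<rho> * g) \<in> outage_j R \<longleftrightarrow> \<rho> * h * (\<rho> * g + 1) \<le> 2 powr (2 * R) - 1"
    using assms by (intro outage_j_iff) auto
  then show ?thesis unfolding conditional_distortion_def D_d_def by (auto simp: indicator_def)
qed

lemma conditional_distortion_bounds:
  assumes "0 < \<rho>" "0 \<le> h" "0 \<le> g" "1 \<le> 2 powr (2 * R)"
  shows "1 / (\<rho> * g + 2 powr (2 * R)) \<le> conditional_distortion R \<rho> h g"
    and "0 \<le> conditional_distortion R \<rho> h g"
    and "conditional_distortion R \<rho> h g \<le> 1"
proof -
  have "0 \<le> \<rho> * g" using assms by simp
  then have "1 / (\<rho> * g + 2 powr (2 * R)) \<le> 1 / (\<rho> * g + 1)"
    using assms by (intro divide_left_mono) (auto intro!: mult_pos_pos add_nonneg_pos)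
  then show "1 / (\<rho> * g + 2 powr (2 * R)) \<le> conditional_distortion R \<rho> h g"
    using conditional_distortion_eq[OF assms] by auto
  show "0 \<le> conditional_distortion R \<rho> h g" "conditional_distortion R \<rho> h g \<le> 1"
    using conditional_distortion_eq[OF assms] assms(4) \<open>0 \<le> \<rho> * g\<close> by auto
qed

lemma two_powr_rate:
  assumes "0 < \<rho>"
  shows "2 powr (2 * (r / 2 * log 2 \<rho>)) = \<rho> powr r"
proof -
  have "2 powr (2 * (r / 2 * log 2 \<rho>)) = (2 powr log 2 \<rho>) powr r" by (simp add: powr_powr mult.commute)
  then show ?thesis using assms by simp
qed

lemma one_div_add_le_powr:
  fixes \<rho> g r \<theta> :: real
  assumes \<rho>: "0 < \<rho>" and g: "0 < g" and \<theta>: "0 \<le> \<theta>" "\<theta> \<le> 1"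
  shows "1 / (\<rho> * g + \<rho> powr r) \<le> \<rho> powr (- (\<theta> + r * (1 - \<theta>))) * g powr (- \<theta>)"
proof -
  have "(\<rho> * g) powr \<theta> * (\<rho> powr r) powr (1 - \<theta>) \<le> \<rho> * g + \<rho> powr r"
    using \<rho> g \<theta> by (intro powr_mult_powr_le_add) auto
  then have "1 / (\<rho> * g + \<rho> powr r) \<le> 1 / ((\<rho> * g) powr \<theta> * (\<rho> powr r) powr (1 - \<theta>))"
    using \<rho> g by (intro divide_left_mono) (auto intro!: mult_pos_pos add_pos_pos)
  also have "(\<rho> * g) powr \<theta> * (\<rho> powr r) powr (1 - \<theta>) = \<rho> powr (\<theta> + r * (1 - \<theta>)) * g powr \<theta>"
    using \<rho> g by (simp add: powr_mult powr_powr powr_add)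
  also have "1 / (\<rho> powr (\<theta> + r * (1 - \<theta>)) * g powr \<theta>) = \<rho> powr (- (\<theta> + r * (1 - \<theta>))) * g powr (- \<theta>)"
    by (simp only: powr_minus_divide) simp
  finally show ?thesis .
qed

lemma one_div_add_one_le_powr:
  fixes \<rho> h g r \<kappa> \<theta>' :: real
  assumes \<rho>: "0 < \<rho>" and h: "0 < h" and g: "0 < g" and hg: "\<rho> * h * (\<rho> * g + 1) \<le> \<rho> powr r"
    and \<kappa>: "0 \<le> \<kappa>" and \<theta>': "0 \<le> \<theta>'" "\<theta>' \<le> 1 + \<kappa>"
  shows "1 / (\<rho> * g + 1) \<le> \<rho> powr (- (\<theta>' + (1 - r) * \<kappa>)) * h powr (- \<kappa>) * g powr (- \<theta>')"
proof -
  txt \<open>Split \<open>1/(\<rho>g + 1) = (\<rho>g + 1)^\<kappa> (\<rho>g + 1)^-(1 + \<kappa>)\<close>; bound the first factor using \<open>hg\<close>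
    and the second by a power of \<open>\<rho>g\<close>.\<close>
  have "\<rho> * g + 1 \<le> \<rho> powr r / (\<rho> * h)" using \<rho> h hg by (simp add: field_simps)
  then have "(\<rho> * g + 1) powr \<kappa> \<le> (\<rho> powr r / (\<rho> * h)) powr \<kappa>"
    using \<rho> g \<kappa> by (intro powr_mono2) auto
  moreover have "(\<rho> * g + 1) powr (- (1 + \<kappa>)) \<le> (\<rho> * g) powr (- \<theta>')"
    using \<rho> g \<theta>' by (intro add_one_powr_neg_le) auto
  ultimately have "(\<rho> * g + 1) powr \<kappa> * (\<rho> * g + 1) powr (- (1 + \<kappa>))
      \<le> (\<rho> powr r / (\<rho> * h)) powr \<kappa> * (\<rho> * g) powr (- \<theta>')"
    by (intro mult_mono) auto
  also have "(\<rho> * g + 1) powr \<kappa> * (\<rho> * g + 1) powr (- (1 + \<kappa>)) = 1 / (\<rho> * g + 1)"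
    using \<rho> g by (simp add: powr_add[symmetric] powr_minus_divide)
  also have "(\<rho> powr r / (\<rho> * h)) powr \<kappa> * (\<rho> * g) powr (- \<theta>')
      = \<rho> powr (- (\<theta>' + (1 - r) * \<kappa>)) * h powr (- \<kappa>) * g powr (- \<theta>')"
    using \<rho> h g by (simp add: powr_divide powr_mult powr_powr powr_minus_divide
        powr_add[symmetric] powr_diff algebra_simps)
  finally show ?thesis .
qed

lemma conditional_distortion_le:
  fixes \<rho> r h g \<theta> \<kappa> \<theta>' :: real
  assumes \<rho>: "1 \<le> \<rho>" and r: "0 \<le> r" and h: "0 < h" and g: "0 < g"
    and \<theta>: "0 \<le> \<theta>" "\<theta> \<le> 1" and \<kappa>: "0 \<le> \<kappa>" and \<theta>': "0 \<le> \<theta>'" "\<theta>' \<le> 1 + \<kappa>"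
  shows "conditional_distortion (r / 2 * log 2 \<rho>) \<rho> h g
    \<le> \<rho> powr (- (\<theta> + r * (1 - \<theta>))) * g powr (- \<theta>)
      + \<rho> powr (- (\<theta>' + (1 - r) * \<kappa>)) * h powr (- \<kappa>) * g powr (- \<theta>')"
    (is "_ \<le> ?A + ?B")
proof -
  have \<rho>0: "0 < \<rho>" using \<rho> by simp
  have rate: "2 powr (2 * (r / 2 * log 2 \<rho>)) = \<rho> powr r" using \<rho>0 by (rule two_powr_rate)
  have "1 \<le> 2 powr (2 * (r / 2 * log 2 \<rho>))" unfolding rate using \<rho> r by (rule ge_one_powr_ge_zero)
  from conditional_distortion_eq[OF \<rho>0 _ _ this, unfolded rate] h g
  have W: "conditional_distortion (r / 2 * log 2 \<rho>) \<rho> h g =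
      (if \<rho> * h * (\<rho> * g + 1) \<le> \<rho> powr r - 1 then 1 / (\<rho> * g + 1) else 1 / (\<rho> * g + \<rho> powr r))"
    by simp
  have "0 \<le> ?A" "0 \<le> ?B" by simp_all
  moreover have "\<rho> * h * (\<rho> * g + 1) \<le> \<rho> powr r - 1 \<Longrightarrow> 1 / (\<rho> * g + 1) \<le> ?B"
    using \<rho>0 h g \<kappa> \<theta>' by (intro one_div_add_one_le_powr) auto
  ultimately show ?thesis
    using W one_div_add_le_powr[OF \<rho>0 g \<theta>, of r] by (auto simp only: split: if_splits intro: add_increasing add_increasing2)
qed

lemma outage_j_measurable [measurable]: "outage_j R \<in> sets (borel \<Otimes>\<^sub>M borel)"
proof -
  define s where "s = 2 powr (2 * R)"
  have "outage_j R = {z \<in> space (borel \<Otimes>\<^sub>M borel). log 2 (1 + fst z) \<le> log 2 (1 + (s - 1) / (snd z + 1))}"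
    unfolding outage_j_def space_pair_measure space_borel s_def by (rule set_eqI) (simp add: split_beta)
  also have "\<dots> \<in> sets (borel \<Otimes>\<^sub>M borel)" by measurable
  finally show ?thesis .
qed

lemma outage_j_compl_measurable [measurable]: "- outage_j R \<in> sets (borel \<Otimes>\<^sub>M borel)"
proof -
  have "- outage_j R = space (borel \<Otimes>\<^sub>M borel) - outage_j R"
    by (simp add: space_pair_measure Compl_eq_Diff_UNIV)
  then show ?thesis using outage_j_measurable by (simp only: sets.compl_sets)
qed

lemma borel_measurable_conditional_distortion [measurable]:
  "(\<lambda>z. conditional_distortion R \<rho> (fst z) (snd z)) \<in> borel_measurable (lborel \<Otimes>\<^sub>M lborel)"
  unfolding conditional_distortion_def D_d_def by measurable

definition nakagami_density :: "real \<Rightarrow> real \<Rightarrow> real \<times> real \<Rightarrow> real" where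
  "nakagami_density Ls Lc z = gamma_density Lc (1 / Lc) (fst z) * gamma_density Ls (1 / Ls) (snd z)"

lemma nakagami_density_nonneg: "0 < Ls \<Longrightarrow> 0 < Lc \<Longrightarrow> 0 \<le> nakagami_density Ls Lc z"
  unfolding nakagami_density_def by (simp add: gamma_density_nonneg)

lemma borel_measurable_nakagami_density [measurable]:
  "nakagami_density Ls Lc \<in> borel_measurable (borel \<Otimes>\<^sub>M borel)"
  unfolding nakagami_density_def by measurable

lemma ED_j_eq_nn_integral:
  assumes Ls: "0 < Ls" and Lc: "0 < Lc" and \<rho>: "0 < \<rho>" and R: "1 \<le> 2 powr (2 * R)"
  shows "0 \<le> ED_j Ls Lc R \<rho>"
    and "ennreal (ED_j Ls Lc R \<rho>) =
    (\<integral>\<^sup>+z. ennreal (nakagami_density Ls Lc z * conditional_distortion R \<rho> (fst z) (snd z)) \<partial>(lborel \<Otimes>\<^sub>M lborel))"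
    (is "_ = (\<integral>\<^sup>+z. ennreal (?f z) \<partial>?M)")
proof -
  have f: "0 \<le> ?f z \<and> ?f z \<le> nakagami_density Ls Lc z" for z
  proof (cases "0 < fst z \<and> 0 < snd z")
    case True
    then show ?thesis
      using conditional_distortion_bounds(2,3)[OF \<rho> _ _ R, of "fst z" "snd z"] nakagami_density_nonneg[OF Ls Lc, of z]
      by (simp add: mult_left_le)
  next
    case False
    then have "nakagami_density Ls Lc z = 0" by (auto simp: nakagami_density_def gamma_density_nonpos)
    then show ?thesis by simp
  qed
  have "(\<integral>\<^sup>+z. ennreal (?f z) \<partial>?M) \<le> (\<integral>\<^sup>+z. ennreal (nakagami_density Ls Lc z) \<partial>?M)"
    using f by (intro nn_integral_mono ennreal_leI) auto
  also have "\<dots> = (\<integral>\<^sup>+x. ennreal (gamma_density Lc (1 / Lc) x) \<partial>lborel)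
      * (\<integral>\<^sup>+y. ennreal (gamma_density Ls (1 / Ls) y) \<partial>lborel)"
    unfolding nakagami_density_def
    by (subst nn_integral_pair_measure_times[symmetric])
       (auto simp: ennreal_mult' gamma_density_nonneg Lc Ls lborel.sigma_finite_measure_axioms)
  also have "\<dots> = 1" using Lc Ls by (simp add: nn_integral_gamma_density)
  finally have "(\<integral>\<^sup>+z. ennreal (?f z) \<partial>?M) < \<infinity>" using ennreal_one_less_top
    by (simp add: le_less_trans)
  moreover have "ED_j Ls Lc R \<rho> = (\<integral>z. ?f z \<partial>?M)"
    unfolding ED_j_def nakagami_density_def conditional_distortion_def by (simp add: case_prod_unfold)
  then have "ED_j Ls Lc R \<rho> = enn2real (\<integral>\<^sup>+z. ennreal (?f z) \<partial>?M)"
    using f by (simp add: integral_eq_nn_integral)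
  ultimately show "0 \<le> ED_j Ls Lc R \<rho>" "ennreal (ED_j Ls Lc R \<rho>) = (\<integral>\<^sup>+z. ennreal (?f z) \<partial>?M)"
    by simp_all
qed

lemma nakagami_density_conditional_distortion_le:
  fixes Ls Lc r \<rho> \<theta> \<kappa> \<theta>' h g :: real
  assumes Ls: "0 < Ls" and Lc: "0 < Lc" and \<rho>: "1 \<le> \<rho>" and r: "0 \<le> r"
    and \<theta>: "0 \<le> \<theta>" "\<theta> \<le> 1" and \<kappa>: "0 \<le> \<kappa>" and \<theta>': "0 \<le> \<theta>'" "\<theta>' \<le> 1 + \<kappa>"
  shows "nakagami_density Ls Lc (h, g) * conditional_distortion (r / 2 * log 2 \<rho>) \<rho> h g
    \<le> \<rho> powr (- (\<theta> + r * (1 - \<theta>))) * (gamma_density Lc (1 / Lc) h * (gamma_density Ls (1 / Ls) g * g powr (- \<theta>)))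
      + \<rho> powr (- (\<theta>' + (1 - r) * \<kappa>)) *
        ((gamma_density Lc (1 / Lc) h * h powr (- \<kappa>)) * (gamma_density Ls (1 / Ls) g * g powr (- \<theta>')))"
    (is "_ \<le> ?rhs")
proof (cases "0 < h \<and> 0 < g")
  case True
  then have "nakagami_density Ls Lc (h, g) * conditional_distortion (r / 2 * log 2 \<rho>) \<rho> h g
      \<le> nakagami_density Ls Lc (h, g) * (\<rho> powr (- (\<theta> + r * (1 - \<theta>))) * g powr (- \<theta>)
        + \<rho> powr (- (\<theta>' + (1 - r) * \<kappa>)) * h powr (- \<kappa>) * g powr (- \<theta>'))"
    using conditional_distortion_le[OF \<rho> r _ _ \<theta> \<kappa> \<theta>'] nakagami_density_nonneg[OF Ls Lc]
    by (intro mult_left_mono) auto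
  also have "\<dots> = ?rhs" by (simp add: nakagami_density_def algebra_simps)
  finally show ?thesis .
next
  case False
  then have "nakagami_density Ls Lc (h, g) = 0" by (auto simp: nakagami_density_def gamma_density_nonpos)
  then show ?thesis using Ls Lc by (simp add: gamma_density_nonneg)
qed

lemma ED_j_le:
  fixes Ls Lc r \<rho> \<theta> \<kappa> \<theta>' :: real
  assumes Ls: "0 < Ls" and Lc: "0 < Lc" and \<rho>: "1 \<le> \<rho>" and r: "0 \<le> r"
    and \<theta>: "0 \<le> \<theta>" "\<theta> \<le> 1" "\<theta> < Ls" and \<kappa>: "0 \<le> \<kappa>" "\<kappa> < Lc"
    and \<theta>': "0 \<le> \<theta>'" "\<theta>' \<le> 1 + \<kappa>" "\<theta>' < Ls"
  shows "ED_j Ls Lc (r / 2 * log 2 \<rho>) \<rho>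
    \<le> \<rho> powr (- (\<theta> + r * (1 - \<theta>))) * gamma_moment Ls (1 / Ls) (- \<theta>)
      + \<rho> powr (- (\<theta>' + (1 - r) * \<kappa>)) * (gamma_moment Lc (1 / Lc) (- \<kappa>) * gamma_moment Ls (1 / Ls) (- \<theta>'))"
    (is "_ \<le> ?a * ?m\<^sub>1 + ?b * (?m\<^sub>2 * ?m\<^sub>3)")
proof -
  define d where "d L x = ennreal (gamma_density L (1 / L) x)" for L x :: real
  define f where "f L \<tau> x = ennreal (gamma_density L (1 / L) x * x powr \<tau>)" for L \<tau> x :: real
  have [measurable]: "d L \<in> borel_measurable borel" "f L \<tau> \<in> borel_measurable borel" for L \<tau>
    unfolding d_def f_def by measurable
  have \<rho>0: "0 < \<rho>" using \<rho> by simp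
  have R: "1 \<le> 2 powr (2 * (r / 2 * log 2 \<rho>))" using \<rho> r by (simp add: two_powr_rate[OF \<rho>0] ge_one_powr_ge_zero)
  have "ennreal (nakagami_density Ls Lc z * conditional_distortion (r / 2 * log 2 \<rho>) \<rho> (fst z) (snd z))
      \<le> ennreal ?a * (d Lc (fst z) * f Ls (- \<theta>) (snd z)) + ennreal ?b * (f Lc (- \<kappa>) (fst z) * f Ls (- \<theta>') (snd z))"
    for z
    using ennreal_leI[OF nakagami_density_conditional_distortion_le[OF Ls Lc \<rho> r \<theta>(1,2) \<kappa>(1) \<theta>'(1,2), of "fst z" "snd z"]]
      Ls Lc by (simp add: d_def f_def gamma_density_nonneg ennreal_mult)
  then have "ennreal (ED_j Ls Lc (r / 2 * log 2 \<rho>) \<rho>)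
      \<le> (\<integral>\<^sup>+z. ennreal ?a * (d Lc (fst z) * f Ls (- \<theta>) (snd z))
          + ennreal ?b * (f Lc (- \<kappa>) (fst z) * f Ls (- \<theta>') (snd z)) \<partial>(lborel \<Otimes>\<^sub>M lborel))"
    unfolding ED_j_eq_nn_integral(2)[OF Ls Lc \<rho>0 R] by (intro nn_integral_mono) auto
  also have "\<dots> = ennreal ?a * ((\<integral>\<^sup>+x. d Lc x \<partial>lborel) * (\<integral>\<^sup>+y. f Ls (- \<theta>) y \<partial>lborel))
      + ennreal ?b * ((\<integral>\<^sup>+x. f Lc (- \<kappa>) x \<partial>lborel) * (\<integral>\<^sup>+y. f Ls (- \<theta>') y \<partial>lborel))"
    by (simp add: nn_integral_add nn_integral_cmult nn_integral_pair_measure_times lborel.sigma_finite_measure_axioms)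
  also have "\<dots> = ennreal (?a * ?m\<^sub>1 + ?b * (?m\<^sub>2 * ?m\<^sub>3))"
    using Ls Lc \<theta> \<kappa> \<theta>' gamma_moment_pos[of Ls "1 / Ls" "- \<theta>"] gamma_moment_pos[of Lc "1 / Lc" "- \<kappa>"]
      gamma_moment_pos[of Ls "1 / Ls" "- \<theta>'"]
    by (simp add: d_def f_def nn_integral_gamma_density nn_integral_gamma_density_powr ennreal_mult)
  finally show ?thesis
    using Ls Lc \<theta> \<kappa> \<theta>' gamma_moment_pos[of Ls "1 / Ls" "- \<theta>"] gamma_moment_pos[of Lc "1 / Lc" "- \<kappa>"]
      gamma_moment_pos[of Ls "1 / Ls" "- \<theta>'"]
    by (subst (asm) ennreal_le_iff) auto
qed

lemma ED_j_ge_box: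
  assumes Ls: "0 < Ls" and Lc: "0 < Lc"
  obtains c where "0 < c"
    "\<And>R \<rho> m x y. 0 < \<rho> \<Longrightarrow> 1 \<le> 2 powr (2 * R) \<Longrightarrow> 0 \<le> m \<Longrightarrow> 0 < x \<Longrightarrow> x \<le> 1 \<Longrightarrow> 0 < y \<Longrightarrow> y \<le> 1 \<Longrightarrow>
      (\<And>h g. h \<in> {y/2..y} \<Longrightarrow> g \<in> {x/2..x} \<Longrightarrow> m \<le> conditional_distortion R \<rho> h g) \<Longrightarrow>
      c * m * y powr Lc * x powr Ls \<le> ED_j Ls Lc R \<rho>"
proof -
  obtain cc where cc: "0 < cc" "\<And>y. 0 < y \<Longrightarrow> y \<le> 1 \<Longrightarrow>
      ennreal (cc * y powr Lc) \<le> (\<integral>\<^sup>+h\<in>{y/2..y}. ennreal (gamma_density Lc (1 / Lc) h) \<partial>lborel)"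
    using gamma_density_interval_mass_ge[of Lc "1 / Lc"] Lc by auto
  obtain cs where cs: "0 < cs" "\<And>x. 0 < x \<Longrightarrow> x \<le> 1 \<Longrightarrow>
      ennreal (cs * x powr Ls) \<le> (\<integral>\<^sup>+g\<in>{x/2..x}. ennreal (gamma_density Ls (1 / Ls) g) \<partial>lborel)"
    using gamma_density_interval_mass_ge[of Ls "1 / Ls"] Ls by auto
  show ?thesis
  proof
    show "0 < cc * cs" using cc cs by simp
    fix R \<rho> m x y :: real
    assume \<rho>: "0 < \<rho>" and R: "1 \<le> 2 powr (2 * R)" and m: "0 \<le> m"
      and x: "0 < x" "x \<le> 1" and y: "0 < y" "y \<le> 1"
      and box: "\<And>h g. h \<in> {y/2..y} \<Longrightarrow> g \<in> {x/2..x} \<Longrightarrow> m \<le> conditional_distortion R \<rho> h g"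
    define A where "A h = ennreal (gamma_density Lc (1 / Lc) h) * indicator {y/2..y} h" for h
    define B where "B g = ennreal (gamma_density Ls (1 / Ls) g) * indicator {x/2..x} g" for g
    have [measurable]: "A \<in> borel_measurable borel" "B \<in> borel_measurable borel"
      unfolding A_def B_def by measurable
    have pointwise: "ennreal m * (A h * B g)
        \<le> ennreal (nakagami_density Ls Lc (h, g) * conditional_distortion R \<rho> h g)" for h g
    proof (cases "h \<in> {y/2..y} \<and> g \<in> {x/2..x}")
      case True
      have "m * nakagami_density Ls Lc (h, g) \<le> conditional_distortion R \<rho> h g * nakagami_density Ls Lc (h, g)"
        using box True nakagami_density_nonneg[OF Ls Lc] by (intro mult_right_mono) auto
      then show ?thesis
        using True m Ls Lc
        by (simp add: A_def B_def nakagami_density_def gamma_density_nonneg ennreal_mult'[symmetric]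
            ennreal_leI mult_ac)
    qed (auto simp: A_def B_def)
    have "ennreal (cc * cs * m * y powr Lc * x powr Ls) = ennreal m * (ennreal (cc * y powr Lc) * ennreal (cs * x powr Ls))"
      using cc cs m by (simp add: ennreal_mult'[symmetric] mult_ac)
    also have "\<dots> \<le> ennreal m * ((\<integral>\<^sup>+h. A h \<partial>lborel) * (\<integral>\<^sup>+g. B g \<partial>lborel))"
      unfolding A_def B_def using cc(2)[OF y] cs(2)[OF x] by (intro mult_left_mono mult_mono) auto
    also have "\<dots> = (\<integral>\<^sup>+z. ennreal m * (A (fst z) * B (snd z)) \<partial>(lborel \<Otimes>\<^sub>M lborel))"
      by (simp add: nn_integral_cmult nn_integral_pair_measure_times lborel.sigma_finite_measure_axioms)
    also have "\<dots> \<le> (\<integral>\<^sup>+z. ennreal (nakagami_density Ls Lc z * conditional_distortion R \<rho> (fst z) (snd z))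
        \<partial>(lborel \<Otimes>\<^sub>M lborel))"
      using pointwise by (intro nn_integral_mono) (metis prod.collapse)
    also have "\<dots> = ennreal (ED_j Ls Lc R \<rho>)"
      by (rule ED_j_eq_nn_integral(2)[OF Ls Lc \<rho> R, symmetric])
    finally show "cc * cs * m * y powr Lc * x powr Ls \<le> ED_j Ls Lc R \<rho>"
      using ED_j_eq_nn_integral(1)[OF Ls Lc \<rho> R] by simp
  qed
qed

lemma conditional_distortion_ge_no_outage:
  fixes \<rho> r h g M :: real
  assumes \<rho>: "1 \<le> \<rho>" and r: "0 \<le> r" "r \<le> M" and h: "0 \<le> h" and g: "0 \<le> g" "\<rho> * g \<le> \<rho> powr M"
  shows "\<rho> powr (- M) / 2 \<le> conditional_distortion (r / 2 * log 2 \<rho>) \<rho> h g"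
proof -
  have \<rho>0: "0 < \<rho>" using \<rho> by simp
  have rate: "2 powr (2 * (r / 2 * log 2 \<rho>)) = \<rho> powr r" using \<rho>0 by (rule two_powr_rate)
  have R: "1 \<le> 2 powr (2 * (r / 2 * log 2 \<rho>))" unfolding rate using \<rho> r by (intro ge_one_powr_ge_zero)
  have "\<rho> * g + \<rho> powr r \<le> 2 * \<rho> powr M" using g powr_mono[OF r(2) \<rho>] by simp
  then have "\<rho> powr (- M) / 2 \<le> 1 / (\<rho> * g + \<rho> powr r)"
    unfolding powr_minus_divide using \<rho>0 g by (auto intro!: divide_left_mono mult_pos_pos add_nonneg_pos)
  also have "\<dots> \<le> conditional_distortion (r / 2 * log 2 \<rho>) \<rho> h g"
    using conditional_distortion_bounds(1)[OF \<rho>0 h g(1) R, unfolded rate] .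
  finally show ?thesis .
qed

lemma conditional_distortion_ge_outage:
  fixes \<rho> r h g P :: real
  assumes \<rho>: "1 \<le> \<rho>" and s: "2 \<le> \<rho> powr r" and P: "0 \<le> P"
    and h: "0 \<le> h" "\<rho> * h \<le> \<rho> powr (r - P) / 4" and g: "0 \<le> g" "\<rho> * g \<le> \<rho> powr P"
  shows "\<rho> powr (- P) / 2 \<le> conditional_distortion (r / 2 * log 2 \<rho>) \<rho> h g"
proof -
  have \<rho>0: "0 < \<rho>" using \<rho> by simp
  have rate: "2 powr (2 * (r / 2 * log 2 \<rho>)) = \<rho> powr r" using \<rho>0 by (rule two_powr_rate)
  have R: "1 \<le> 2 powr (2 * (r / 2 * log 2 \<rho>))" unfolding rate using s by simp
  have g_le: "\<rho> * g + 1 \<le> 2 * \<rho> powr P" using g powr_mono[OF P \<rho>] \<rho>0 by simp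
  have "\<rho> * h * (\<rho> * g + 1) \<le> \<rho> powr (r - P) / 4 * (2 * \<rho> powr P)"
    using h g g_le \<rho>0 by (intro mult_mono) auto
  also have "\<dots> = \<rho> powr r / 2" by (simp add: powr_diff)
  finally have "\<rho> * h * (\<rho> * g + 1) \<le> \<rho> powr r - 1" using s by linarith
  then have "conditional_distortion (r / 2 * log 2 \<rho>) \<rho> h g = 1 / (\<rho> * g + 1)"
    using conditional_distortion_eq[OF \<rho>0 h(1) g(1) R, unfolded rate] by simp
  then show ?thesis
    unfolding powr_minus_divide using g_le g \<rho>0 by (auto intro!: divide_left_mono mult_pos_pos add_nonneg_pos)
qed

lemma ED_j_ge_no_outage:
  fixes Ls Lc r \<beta> :: real
  assumes Ls: "0 < Ls" and Lc: "0 < Lc" and r: "0 \<le> r" and \<beta>: "0 \<le> \<beta>"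
  shows "\<exists>K>0. \<forall>\<^sub>F \<rho> in at_top. K * \<rho> powr (- (Ls * \<beta> + max (1 - \<beta>) r)) \<le> ED_j Ls Lc (r / 2 * log 2 \<rho>) \<rho>"
proof -
  obtain c where c: "0 < c" and box: "\<And>R \<rho> m x y. 0 < \<rho> \<Longrightarrow> 1 \<le> 2 powr (2 * R) \<Longrightarrow> 0 \<le> m \<Longrightarrow>
      0 < x \<Longrightarrow> x \<le> 1 \<Longrightarrow> 0 < y \<Longrightarrow> y \<le> 1 \<Longrightarrow>
      (\<And>h g. h \<in> {y/2..y} \<Longrightarrow> g \<in> {x/2..x} \<Longrightarrow> m \<le> conditional_distortion R \<rho> h g) \<Longrightarrow>
      c * m * y powr Lc * x powr Ls \<le> ED_j Ls Lc R \<rho>"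
    using ED_j_ge_box[OF Ls Lc] by blast
  define M where "M = max (1 - \<beta>) r"
  have "c / 2 * \<rho> powr (- (Ls * \<beta> + M)) \<le> ED_j Ls Lc (r / 2 * log 2 \<rho>) \<rho>" if \<rho>: "1 \<le> \<rho>" for \<rho>
  proof -
    define x where "x = \<rho> powr (- \<beta>)"
    have \<rho>0: "0 < \<rho>" using \<rho> by simp
    have R: "1 \<le> 2 powr (2 * (r / 2 * log 2 \<rho>))" using \<rho> r by (simp add: two_powr_rate[OF \<rho>0] ge_one_powr_ge_zero)
    have x: "0 < x" "x \<le> 1" unfolding x_def using \<rho> \<beta> powr_mono[of "- \<beta>" 0 \<rho>] by auto
    have "\<rho> * x \<le> \<rho> powr M"
      unfolding x_def M_def using \<rho> by (simp add: powr_mult_base powr_mono)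
    then have "\<rho> powr (- M) / 2 \<le> conditional_distortion (r / 2 * log 2 \<rho>) \<rho> h g"
      if "h \<in> {1/2..1}" "g \<in> {x/2..x}" for h g
      using that x \<rho> r by (intro conditional_distortion_ge_no_outage) (auto simp: M_def intro: order_trans[rotated])
    then have "c * (\<rho> powr (- M) / 2) * 1 powr Lc * x powr Ls \<le> ED_j Ls Lc (r / 2 * log 2 \<rho>) \<rho>"
      by (intro box[OF \<rho>0 R _ x]) auto
    also have "x powr Ls = \<rho> powr (- \<beta> * Ls)" unfolding x_def by (rule powr_powr)
    also have "c * (\<rho> powr (- M) / 2) * 1 powr Lc * \<rho> powr (- \<beta> * Ls) = c / 2 * \<rho> powr (- (Ls * \<beta> + M))"
      by (simp add: powr_add[symmetric] algebra_simps)
    finally show ?thesis .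
  qed
  then show ?thesis using c unfolding M_def by (intro exI[of _ "c / 2"]) (auto intro: eventually_at_top_linorderI)
qed

lemma ED_j_ge_outage:
  fixes Ls Lc r \<beta> :: real
  assumes Ls: "0 < Ls" and Lc: "0 < Lc" and r: "0 < r" and \<beta>: "0 \<le> \<beta>"
  shows "\<exists>K>0. \<forall>\<^sub>F \<rho> in at_top.
    K * \<rho> powr (- (Ls * \<beta> + max 0 (1 - \<beta>) + Lc * max 0 (1 - r + max 0 (1 - \<beta>)))) \<le> ED_j Ls Lc (r / 2 * log 2 \<rho>) \<rho>"
proof -
  obtain c where c: "0 < c" and box: "\<And>R \<rho> m x y. 0 < \<rho> \<Longrightarrow> 1 \<le> 2 powr (2 * R) \<Longrightarrow> 0 \<le> m \<Longrightarrow>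
      0 < x \<Longrightarrow> x \<le> 1 \<Longrightarrow> 0 < y \<Longrightarrow> y \<le> 1 \<Longrightarrow>
      (\<And>h g. h \<in> {y/2..y} \<Longrightarrow> g \<in> {x/2..x} \<Longrightarrow> m \<le> conditional_distortion R \<rho> h g) \<Longrightarrow>
      c * m * y powr Lc * x powr Ls \<le> ED_j Ls Lc R \<rho>"
    using ED_j_ge_box[OF Ls Lc] by blast
  define P where "P = max 0 (1 - \<beta>)"
  define \<gamma> where "\<gamma> = max 0 (1 - r + P)"
  define K where "K = c / (2 * 4 powr Lc)"
  have "K * \<rho> powr (- (Ls * \<beta> + P + Lc * \<gamma>)) \<le> ED_j Ls Lc (r / 2 * log 2 \<rho>) \<rho>"
    if \<rho>: "max 1 (2 powr (1 / r)) \<le> \<rho>" for \<rho>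
  proof -
    define x where "x = \<rho> powr (- \<beta>)"
    define y where "y = \<rho> powr (- \<gamma>) / 4"
    have \<rho>1: "1 \<le> \<rho>" and \<rho>0: "0 < \<rho>" using \<rho> by auto
    have R: "1 \<le> 2 powr (2 * (r / 2 * log 2 \<rho>))" using \<rho>1 r by (simp add: two_powr_rate[OF \<rho>0] ge_one_powr_ge_zero)
    have "(2::real) = (2 powr (1 / r)) powr r" using r by (simp add: powr_powr)
    also have "\<dots> \<le> \<rho> powr r" using \<rho> r by (intro powr_mono2) auto
    finally have s: "2 \<le> \<rho> powr r" .
    have x: "0 < x" "x \<le> 1" unfolding x_def using \<rho>1 \<beta> powr_mono[of "- \<beta>" 0 \<rho>] by auto
    have y: "0 < y" "y \<le> 1" unfolding y_def using \<rho>1 powr_mono[of "- \<gamma>" 0 \<rho>] by (auto simp: \<gamma>_def)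
    have "\<rho> * x \<le> \<rho> powr P" unfolding x_def P_def using \<rho>1 by (simp add: powr_mult_base powr_mono)
    moreover have "\<rho> * y \<le> \<rho> powr (r - P) / 4" unfolding y_def \<gamma>_def using \<rho>1 by (simp add: powr_mult_base powr_mono)
    ultimately have "\<rho> powr (- P) / 2 \<le> conditional_distortion (r / 2 * log 2 \<rho>) \<rho> h g"
      if "h \<in> {y/2..y}" "g \<in> {x/2..x}" for h g
      using that x y \<rho>0 by (intro conditional_distortion_ge_outage[OF \<rho>1 s]) (auto simp: P_def intro: order_trans[rotated])
    then have "c * (\<rho> powr (- P) / 2) * y powr Lc * x powr Ls \<le> ED_j Ls Lc (r / 2 * log 2 \<rho>) \<rho>"
      by (intro box[OF \<rho>0 R _ x y]) auto
    also have "x powr Ls = \<rho> powr (- \<beta> * Ls)" unfolding x_def by (rule powr_powr)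
    also have "y powr Lc = \<rho> powr (- \<gamma> * Lc) / 4 powr Lc" unfolding y_def by (simp add: powr_divide powr_powr)
    also have "c * (\<rho> powr (- P) / 2) * (\<rho> powr (- \<gamma> * Lc) / 4 powr Lc) * \<rho> powr (- \<beta> * Ls)
        = K * \<rho> powr (- (Ls * \<beta> + P + Lc * \<gamma>))"
      by (simp add: K_def powr_add[symmetric] algebra_simps)
    finally show ?thesis .
  qed
  then have "\<forall>\<^sub>F \<rho> in at_top. K * \<rho> powr (- (Ls * \<beta> + P + Lc * \<gamma>)) \<le> ED_j Ls Lc (r / 2 * log 2 \<rho>) \<rho>"
    using eventually_ge_at_top[of "max 1 (2 powr (1 / r))"] by (rule eventually_mono[rotated])
  moreover have "0 < K" using c by (simp add: K_def)
  ultimately show ?thesis unfolding P_def \<gamma>_def by blast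
qed

lemma ED_j_le_powr:
  fixes Ls Lc r \<theta> \<kappa> \<theta>' :: real
  assumes Ls: "0 < Ls" and Lc: "0 < Lc" and r: "0 \<le> r"
    and \<theta>: "0 \<le> \<theta>" "\<theta> \<le> 1" "\<theta> < Ls" and \<kappa>: "0 \<le> \<kappa>" "\<kappa> < Lc"
    and \<theta>': "0 \<le> \<theta>'" "\<theta>' \<le> 1 + \<kappa>" "\<theta>' < Ls"
  shows "\<exists>C. \<forall>\<rho>\<ge>1. ED_j Ls Lc (r / 2 * log 2 \<rho>) \<rho> \<le> C * \<rho> powr (- min (\<theta> + r * (1 - \<theta>)) (\<theta>' + (1 - r) * \<kappa>))"
proof (intro exI allI impI)
  fix \<rho> :: real assume \<rho>: "1 \<le> \<rho>"
  let ?m = "min (\<theta> + r * (1 - \<theta>)) (\<theta>' + (1 - r) * \<kappa>)"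
  let ?m\<^sub>1 = "gamma_moment Ls (1 / Ls) (- \<theta>)" and ?m\<^sub>2 = "gamma_moment Lc (1 / Lc) (- \<kappa>) * gamma_moment Ls (1 / Ls) (- \<theta>')"
  have "0 \<le> ?m\<^sub>1" "0 \<le> ?m\<^sub>2" using Ls Lc \<theta> \<kappa> \<theta>' by (auto intro!: less_imp_le mult_pos_pos gamma_moment_pos)
  moreover have "\<rho> powr (- (\<theta> + r * (1 - \<theta>))) \<le> \<rho> powr (- ?m)" "\<rho> powr (- (\<theta>' + (1 - r) * \<kappa>)) \<le> \<rho> powr (- ?m)"
    using \<rho> by (auto intro!: powr_mono)
  ultimately have "\<rho> powr (- (\<theta> + r * (1 - \<theta>))) * ?m\<^sub>1 + \<rho> powr (- (\<theta>' + (1 - r) * \<kappa>)) * ?m\<^sub>2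
      \<le> \<rho> powr (- ?m) * ?m\<^sub>1 + \<rho> powr (- ?m) * ?m\<^sub>2"
    by (intro add_mono mult_right_mono)
  with ED_j_le[OF Ls Lc \<rho> r \<theta> \<kappa> \<theta>'] show "ED_j Ls Lc (r / 2 * log 2 \<rho>) \<rho> \<le> (?m\<^sub>1 + ?m\<^sub>2) * \<rho> powr (- ?m)"
    by (simp add: algebra_simps)
qed

lemma eventually_ED_j_pos:
  assumes "0 < Ls" "0 < Lc" "0 \<le> r"
  shows "\<forall>\<^sub>F \<rho> in at_top. 0 < ED_j Ls Lc (r / 2 * log 2 \<rho>) \<rho>"
proof -
  obtain K where K: "0 < K"
    and bound: "\<forall>\<^sub>F \<rho> in at_top. K * \<rho> powr (- (Ls * 0 + max (1 - 0) r)) \<le> ED_j Ls Lc (r / 2 * log 2 \<rho>) \<rho>"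
    using ED_j_ge_no_outage[OF assms order_refl] by blast
  from bound eventually_gt_at_top[of 0] show ?thesis
    by eventually_elim (use K in \<open>auto intro: less_le_trans[rotated]\<close>)
qed

section \<open>The distortion exponent\<close>

lemma ED_j_lower_exponent:
  fixes Ls Lc r \<beta>\<^sub>1 \<beta>\<^sub>2 y :: real
  assumes Ls: "0 < Ls" and Lc: "0 < Lc" and r: "0 < r" and \<beta>: "0 \<le> \<beta>\<^sub>1" "0 \<le> \<beta>\<^sub>2"
    and y: "min (Ls * \<beta>\<^sub>1 + max (1 - \<beta>\<^sub>1) r)
      (Ls * \<beta>\<^sub>2 + max 0 (1 - \<beta>\<^sub>2) + Lc * max 0 (1 - r + max 0 (1 - \<beta>\<^sub>2))) < y"
  shows "\<exists>K>0. \<exists>E<y. \<forall>\<^sub>F \<rho> in at_top. K * \<rho> powr (- E) \<le> ED_j Ls Lc (r / 2 * log 2 \<rho>) \<rho>"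
proof -
  obtain K\<^sub>1 where "0 < K\<^sub>1" "\<forall>\<^sub>F \<rho> in at_top.
      K\<^sub>1 * \<rho> powr (- (Ls * \<beta>\<^sub>1 + max (1 - \<beta>\<^sub>1) r)) \<le> ED_j Ls Lc (r / 2 * log 2 \<rho>) \<rho>"
    using ED_j_ge_no_outage[OF Ls Lc less_imp_le[OF r] \<beta>(1)] by blast
  moreover obtain K\<^sub>2 where "0 < K\<^sub>2" "\<forall>\<^sub>F \<rho> in at_top.
      K\<^sub>2 * \<rho> powr (- (Ls * \<beta>\<^sub>2 + max 0 (1 - \<beta>\<^sub>2) + Lc * max 0 (1 - r + max 0 (1 - \<beta>\<^sub>2))))
      \<le> ED_j Ls Lc (r / 2 * log 2 \<rho>) \<rho>"
    using ED_j_ge_outage[OF Ls Lc r \<beta>(2)] by blast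
  ultimately show ?thesis using y unfolding min_less_iff_disj by blast
qed

lemma ED_j_upper_exponent:
  fixes Ls Lc r \<theta> \<kappa> \<theta>' y :: real
  assumes Ls: "0 < Ls" and Lc: "0 < Lc" and r: "0 \<le> r"
    and \<theta>: "0 \<le> \<theta>" "\<theta> \<le> 1" "\<theta> \<le> Ls" and \<kappa>: "0 \<le> \<kappa>" "\<kappa> \<le> Lc"
    and \<theta>': "0 \<le> \<theta>'" "\<theta>' \<le> 1 + \<kappa>" "\<theta>' \<le> Ls"
    and y: "y < min (\<theta> + r * (1 - \<theta>)) (\<theta>' + (1 - r) * \<kappa>)"
  shows "\<exists>C. \<exists>E>y. \<forall>\<^sub>F \<rho> in at_top.
    0 < ED_j Ls Lc (r / 2 * log 2 \<rho>) \<rho> \<and> ED_j Ls Lc (r / 2 * log 2 \<rho>) \<rho> \<le> C * \<rho> powr (- E)"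
proof -
  txt \<open>\<open>ED_j_le_powr\<close> needs strict inequalities, so shrink \<open>\<theta>, \<kappa>, \<theta>'\<close> by a factor \<open>t < 1\<close> close to 1.\<close>
  define f where "f t = min (t * \<theta> + r * (1 - t * \<theta>)) (t * \<theta>' + (1 - r) * (t * \<kappa>))" for t
  have "isCont f 1" unfolding f_def by (intro continuous_intros)
  then have "(f \<longlongrightarrow> min (\<theta> + r * (1 - \<theta>)) (\<theta>' + (1 - r) * \<kappa>)) (at_left 1)"
    unfolding f_def isCont_def by (simp add: filterlim_at_split)
  then have "\<forall>\<^sub>F t in at_left 1. y < f t" using y by (rule order_tendstoD)
  moreover have "\<forall>\<^sub>F t in at_left 1. t \<in> {0<..<(1::real)}" by (rule eventually_at_left_real) simp
  ultimately have "\<forall>\<^sub>F t in at_left 1. y < f t \<and> 0 < t \<and> t < (1::real)"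
    by eventually_elim simp
  then obtain t where t: "y < f t" "0 < t" "t < 1"
    using eventually_happens[of _ "at_left (1::real)"] by force
  have lt: "t * z < B" if "0 \<le> z" "z \<le> B" "0 < B" for z B
  proof (cases "z = 0")
    case False
    then have "t * z < 1 * z" using t that by (intro mult_strict_right_mono) auto
    then show ?thesis using that by simp
  qed (use that in simp)
  have "t * \<theta>' \<le> t * (1 + \<kappa>)" using t \<theta>' by (intro mult_left_mono) auto
  then have scaled: "0 \<le> t * \<theta>" "t * \<theta> \<le> 1" "t * \<theta> < Ls" "0 \<le> t * \<kappa>" "t * \<kappa> < Lc"
      "0 \<le> t * \<theta>'" "t * \<theta>' \<le> 1 + t * \<kappa>" "t * \<theta>' < Ls"
    using t \<theta> \<kappa> \<theta>' Ls Lc mult_left_le_one_le[of \<theta> t] lt[of \<theta> Ls] lt[of \<kappa> Lc] lt[of \<theta>' Ls]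
    by (auto simp: algebra_simps)
  obtain C where C: "\<forall>\<rho>\<ge>1. ED_j Ls Lc (r / 2 * log 2 \<rho>) \<rho> \<le> C * \<rho> powr (- f t)"
    using ED_j_le_powr[OF Ls Lc r scaled] unfolding f_def by blast
  from eventually_ED_j_pos[OF Ls Lc r] eventually_ge_at_top[of 1]
  have "\<forall>\<^sub>F \<rho> in at_top. 0 < ED_j Ls Lc (r / 2 * log 2 \<rho>) \<rho> \<and> ED_j Ls Lc (r / 2 * log 2 \<rho>) \<rho> \<le> C * \<rho> powr (- f t)"
    by eventually_elim (use C in auto)
  then show ?thesis using t by blast
qed

lemma tendsto_ED_j_exponent:
  fixes Ls Lc r \<beta>\<^sub>1 \<beta>\<^sub>2 \<theta> \<kappa> \<theta>' e :: real
  assumes Ls: "0 < Ls" and Lc: "0 < Lc" and r: "0 < r" and \<beta>: "0 \<le> \<beta>\<^sub>1" "0 \<le> \<beta>\<^sub>2"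
    and \<theta>: "0 \<le> \<theta>" "\<theta> \<le> 1" "\<theta> \<le> Ls" and \<kappa>: "0 \<le> \<kappa>" "\<kappa> \<le> Lc"
    and \<theta>': "0 \<le> \<theta>'" "\<theta>' \<le> 1 + \<kappa>" "\<theta>' \<le> Ls"
    and e_lower: "e = min (Ls * \<beta>\<^sub>1 + max (1 - \<beta>\<^sub>1) r)
      (Ls * \<beta>\<^sub>2 + max 0 (1 - \<beta>\<^sub>2) + Lc * max 0 (1 - r + max 0 (1 - \<beta>\<^sub>2)))"
    and e_upper: "e = min (\<theta> + r * (1 - \<theta>)) (\<theta>' + (1 - r) * \<kappa>)"
  shows "((\<lambda>\<rho>. - ln (ED_j Ls Lc (r / 2 * log 2 \<rho>) \<rho>) / ln \<rho>) \<longlongrightarrow> e) at_top"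
proof (rule tendsto_neg_ln_div_ln)
  show "\<exists>K>0. \<exists>E<y. \<forall>\<^sub>F \<rho> in at_top. K * \<rho> powr (- E) \<le> ED_j Ls Lc (r / 2 * log 2 \<rho>) \<rho>" if "e < y" for y
    using ED_j_lower_exponent[OF Ls Lc r \<beta>] that unfolding e_lower by blast
  show "\<exists>C. \<exists>E>y. \<forall>\<^sub>F \<rho> in at_top.
      0 < ED_j Ls Lc (r / 2 * log 2 \<rho>) \<rho> \<and> ED_j Ls Lc (r / 2 * log 2 \<rho>) \<rho> \<le> C * \<rho> powr (- E)" if "y < e" for y
    using ED_j_upper_exponent[OF Ls Lc less_imp_le[OF r] \<theta> \<kappa> \<theta>'] that unfolding e_upper by blast
qed

text \<open>The optimal exponents of \<open>ED_j_ge_no_outage\<close> and \<open>ED_j_ge_outage\<close> over \<open>\<beta> \<ge> 0\<close>.\<close>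

definition no_outage_exponent :: "real \<Rightarrow> real \<Rightarrow> real" where
  "no_outage_exponent Ls r = (if r < 1 then r + min Ls 1 * (1 - r) else r)"

definition outage_exponent :: "real \<Rightarrow> real \<Rightarrow> real \<Rightarrow> real" where
  "outage_exponent Ls Lc r = (if r < 1 then min Ls (1 + Lc) + Lc * (1 - r)
      else if Ls \<le> 1 then Ls else if r \<le> 2 then 1 + min (Ls - 1) Lc * (2 - r) else 1)"

definition jds_exponent :: "real \<Rightarrow> real \<Rightarrow> real \<Rightarrow> real" where
  "jds_exponent Ls Lc r = min (no_outage_exponent Ls r) (outage_exponent Ls Lc r)"

lemma tendsto_jds_exponent:
  fixes Ls Lc r :: real
  assumes Ls: "0 < Ls" and Lc: "0 < Lc" and r: "0 < r"
  shows "((\<lambda>\<rho>. - ln (ED_j Ls Lc (r / 2 * log 2 \<rho>) \<rho>) / ln \<rho>) \<longlongrightarrow> jds_exponent Ls Lc r) at_top"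
proof -
  note defs = jds_exponent_def no_outage_exponent_def outage_exponent_def min_def max_def
  consider "r < 1" "Ls \<le> 1" | "r < 1" "1 < Ls" "Ls \<le> 1 + Lc" | "r < 1" "1 + Lc < Ls"
    | "1 \<le> r" "Ls \<le> 1" | "1 \<le> r" "r \<le> 2" "1 < Ls" "Ls \<le> 1 + Lc"
    | "1 \<le> r" "r \<le> 2" "1 + Lc < Ls" | "2 < r" "1 < Ls"
    by linarith
  then show ?thesis
  proof cases
    txt \<open>In each regime the witnesses \<open>\<beta>\<^sub>1, \<beta>\<^sub>2, \<theta>, \<kappa>, \<theta>'\<close> make the lower and upper exponents coincide.\<close>
    case 1
    show ?thesis by (rule tendsto_ED_j_exponent[OF Ls Lc r, of "1 - r" 1 Ls Lc Ls]) (use 1 Ls Lc in \<open>auto simp: defs algebra_simps\<close>)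
  next
    case 2
    show ?thesis by (rule tendsto_ED_j_exponent[OF Ls Lc r, of 0 1 1 Lc Ls]) (use 2 Ls Lc in \<open>auto simp: defs algebra_simps\<close>)
  next
    case 3
    show ?thesis by (rule tendsto_ED_j_exponent[OF Ls Lc r, of 0 0 1 Lc "1 + Lc"]) (use 3 Ls Lc in \<open>auto simp: defs algebra_simps\<close>)
  next
    case 4
    show ?thesis by (rule tendsto_ED_j_exponent[OF Ls Lc r, of 0 1 0 0 Ls]) (use 4 Ls Lc in \<open>auto simp: defs algebra_simps\<close>)
  next
    case 5
    show ?thesis by (rule tendsto_ED_j_exponent[OF Ls Lc r, of 0 "2 - r" 0 "Ls - 1" Ls]) (use 5 Ls Lc in \<open>auto simp: defs algebra_simps\<close>)
  next
    case 6
    show ?thesis by (rule tendsto_ED_j_exponent[OF Ls Lc r, of 0 0 0 Lc "1 + Lc"]) (use 6 Ls Lc in \<open>auto simp: defs algebra_simps\<close>)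
  next
    case 7
    show ?thesis by (rule tendsto_ED_j_exponent[OF Ls Lc r, of 0 0 0 0 1]) (use 7 Ls Lc in \<open>auto simp: defs algebra_simps\<close>)
  qed
qed

lemma Delta_formula_if_le_one:
  fixes Ls Lc :: real
  assumes "0 < Ls" "Ls \<le> 1" "0 < Lc"
  shows "Delta_formula Ls Lc = Ls + Lc * (1 - Ls) / (Lc + 1 - Ls)"
proof -
  have "0 < Lc + 1 - Ls" using assms by linarith
  then have "1 - (1 - Ls)\<^sup>2 / (Lc + 1 - Ls) = Ls + Lc * (1 - Ls) / (Lc + 1 - Ls)"
    by (simp add: field_simps power2_eq_square)
  then show ?thesis using assms unfolding Delta_formula_def by simp
qed

lemma Delta_formula_if_gt_one:
  fixes Ls Lc :: real
  assumes "1 < Ls" "0 < Lc"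
  shows "Delta_formula Ls Lc = (1 + 2 * min (Ls - 1) Lc) / (1 + min (Ls - 1) Lc)"
proof (cases "Ls \<le> 1 + Lc")
  case True
  then show ?thesis using assms unfolding Delta_formula_def by (simp add: field_simps)
next
  case False
  then show ?thesis using assms unfolding Delta_formula_def by (simp add: field_simps)
qed

lemma min_le_weighted_mean:
  fixes X Y u v T :: real
  assumes "0 < u" "0 \<le> v" "u * X + v * Y = (u + v) * T"
  shows "min X Y \<le> T"
proof (rule ccontr)
  assume "\<not> min X Y \<le> T"
  then have "u * T < u * X" "v * T \<le> v * Y" using assms by (auto intro: mult_left_mono)
  then have "(u + v) * T < u * X + v * Y" by (simp add: algebra_simps)
  then show False using assms by simp
qed

lemma jds_exponent_le_Delta_formula:
  fixes Ls Lc r :: real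
  assumes Ls: "0 < Ls" and Lc: "0 < Lc" and r: "0 < r"
  shows "jds_exponent Ls Lc r \<le> Delta_formula Ls Lc"
proof (cases "Ls \<le> 1")
  case True
  define t where "t = Lc * (1 - Ls) / (Lc + 1 - Ls)"
  have t: "0 \<le> t" "t * (Lc + 1 - Ls) = Lc * (1 - Ls)" using Lc True by (simp_all add: t_def)
  have "jds_exponent Ls Lc r \<le> Ls + t"
  proof (cases "r < 1")
    case r1: True
    have "min Ls 1 = Ls" "min Ls (1 + Lc) = Ls" using True Lc by auto
    then have "jds_exponent Ls Lc r = Ls + min (r * (1 - Ls)) (Lc * (1 - r))"
      using r1 unfolding jds_exponent_def no_outage_exponent_def outage_exponent_def
      by (simp add: algebra_simps min_add_distrib_left)
    moreover have "min (r * (1 - Ls)) (Lc * (1 - r)) \<le> t"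
      by (rule min_le_weighted_mean[of Lc "1 - Ls"]) (use t Lc True in \<open>auto simp: algebra_simps\<close>)
    ultimately show ?thesis by simp
  qed (use True t in \<open>auto simp: jds_exponent_def outage_exponent_def\<close>)
  then show ?thesis using Delta_formula_if_le_one[OF Ls True Lc] by (simp add: t_def)
next
  case Ls1: False
  define K where "K = min (Ls - 1) Lc"
  have K: "0 < K" unfolding K_def using Ls1 Lc by simp
  then have one: "1 \<le> (1 + 2 * K) / (1 + K)" by simp
  consider "r < 1" | "2 < r" | "1 \<le> r" "r \<le> 2" by linarith
  then have "jds_exponent Ls Lc r \<le> (1 + 2 * K) / (1 + K)"
  proof cases
    case 1
    have "jds_exponent Ls Lc r \<le> no_outage_exponent Ls r" by (simp add: jds_exponent_def)
    also have "\<dots> = 1" using 1 Ls1 by (simp add: no_outage_exponent_def)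
    finally show ?thesis using one by linarith
  next
    case 2
    have "jds_exponent Ls Lc r \<le> outage_exponent Ls Lc r" by (simp add: jds_exponent_def)
    also have "\<dots> = 1" using 2 Ls1 by (simp add: outage_exponent_def)
    finally show ?thesis using one by linarith
  next
    case 3
    have "min r (1 + K * (2 - r)) \<le> (1 + 2 * K) / (1 + K)"
      by (rule min_le_weighted_mean[of K 1]) (use K in \<open>auto simp: field_simps\<close>)
    then show ?thesis using 3 Ls1 unfolding jds_exponent_def no_outage_exponent_def outage_exponent_def K_def
      by auto
  qed
  then show ?thesis using Delta_formula_if_gt_one[OF _ Lc] Ls1 unfolding K_def by simp
qed

lemma jds_exponent_attains_Delta_formula:
  fixes Ls Lc :: real
  assumes Ls: "0 < Ls" and Lc: "0 < Lc"
  shows "\<exists>r>0. jds_exponent Ls Lc r = Delta_formula Ls Lc"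
proof -
  note defs = jds_exponent_def no_outage_exponent_def outage_exponent_def
  consider "Ls < 1" | "Ls = 1" | "1 < Ls" by linarith
  then show ?thesis
  proof cases
    case 1
    define D where "D = Lc + 1 - Ls"
    define r where "r = Lc / D"
    have D: "0 < D" using Lc 1 by (simp add: D_def)
    have r: "0 < r" "r < 1" using Lc 1 by (auto simp: r_def D_def field_simps)
    have one_minus_r: "1 - r = (1 - Ls) / D" using D by (simp add: r_def D_def field_simps)
    have "min Ls 1 = Ls" "min Ls (1 + Lc) = Ls" using 1 Lc by auto
    moreover have "r + Ls * (1 - r) = Ls + Lc * (1 - Ls) / D" using D by (simp add: r_def field_simps)
    moreover have "Ls + Lc * (1 - r) = Ls + Lc * (1 - Ls) / D" by (simp add: one_minus_r)
    ultimately have "jds_exponent Ls Lc r = Ls + Lc * (1 - Ls) / D"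
      using r unfolding defs by (simp add: algebra_simps)
    then have "jds_exponent Ls Lc r = Delta_formula Ls Lc"
      using Delta_formula_if_le_one[OF Ls less_imp_le[OF 1] Lc] unfolding D_def by linarith
    then show ?thesis using r by blast
  next
    case 2
    then have "jds_exponent Ls Lc 1 = Delta_formula Ls Lc" by (simp add: defs Delta_formula_def)
    then show ?thesis by (intro exI[of _ 1]) simp
  next
    case 3
    define K where "K = min (Ls - 1) Lc"
    define r where "r = (1 + 2 * K) / (1 + K)"
    have K: "0 < K" unfolding K_def using 3 Lc by simp
    then have r: "1 \<le> r" "r \<le> 2" "1 + K * (2 - r) = r" by (simp_all add: r_def field_simps)
    then have "jds_exponent Ls Lc r = Delta_formula Ls Lc"
      using 3 Delta_formula_if_gt_one[OF 3 Lc] by (simp add: defs K_def r_def)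
    then show ?thesis using r by (intro exI[of _ r]) simp
  qed
qed

theorem lemma9:
  fixes Ls Lc :: real
  assumes "Lc > 0" and "Ls > 0"
  shows "(\<forall>rj>0. \<exists>l. ((\<lambda>\<rho>. - ln (ED_j Ls Lc (rj / 2 * log 2 \<rho>) \<rho>) / ln \<rho>) \<longlongrightarrow> l) at_top)
    \<and> (SUP rj\<in>{0<..}. ereal (Lim at_top (\<lambda>\<rho>. - ln (ED_j Ls Lc (rj / 2 * log 2 \<rho>) \<rho>) / ln \<rho>)))
        = ereal (Delta_formula Ls Lc)"
proof -
  note tendsto = tendsto_jds_exponent[OF \<open>Ls > 0\<close> \<open>Lc > 0\<close>]
  have "(SUP rj\<in>{0<..}. ereal (Lim at_top (\<lambda>\<rho>. - ln (ED_j Ls Lc (rj / 2 * log 2 \<rho>) \<rho>) / ln \<rho>)))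
      = (SUP rj\<in>{0<..}. ereal (jds_exponent Ls Lc rj))"
    using tendsto by (intro SUP_cong) (auto intro: tendsto_Lim)
  also have "\<dots> = ereal (Delta_formula Ls Lc)"
  proof (rule antisym)
    show "(SUP rj\<in>{0<..}. ereal (jds_exponent Ls Lc rj)) \<le> ereal (Delta_formula Ls Lc)"
      using jds_exponent_le_Delta_formula assms by (intro SUP_least) auto
    obtain r where "0 < r" "jds_exponent Ls Lc r = Delta_formula Ls Lc"
      using jds_exponent_attains_Delta_formula assms by blast
    then show "ereal (Delta_formula Ls Lc) \<le> (SUP rj\<in>{0<..}. ereal (jds_exponent Ls Lc rj))"
      by (intro SUP_upper2[of r]) auto
  qed
  finally show ?thesis using tendsto by blast
qed

end
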